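(* Let $p$ be a prime and $n$ a positive integer. If $\{(a_i,b_i,c_i)\}_{i=1}^m$ is a tricolored ordered sum-free set in $\mathbb{F}_p^n$, then $m\le 3N$, where $N$ is the number of monomials in $n$ variables of total degree at most $(p-1)n/3$ in which each variable has degree at most $p-1$; equivalently, \[N=\sum \frac{n!}{n_0!\,n_1!\cdots n_{p-1}!},\] the sum taken over all non-negative integers $n_0,n_1,\ldots,n_{p-1}$ with $n_0+n_1+\cdots+n_{p-1}=n$ and $n_1+2n_2+\cdots+(p-1)n_{p-1}\le (p-1)n/3$.
   Context: A tricolored ordered sum-free set in an abelian group $H$ is a collection $\{(a_i,b_i,c_i)\}_{i=1}^m$ of ordered triples of elements of $H$ such that (i) $a_i+b_i+c_i=0$ for all $i=1,\ldots,m$, and (ii) for all $i,j,k\in\{1,\ldots,m\}$, if $a_i+b_j+c_k=0$ then $i\le j\le k$. *)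

theory Defs
  imports "HOL-Computational_Algebra.Primes"
begin

text \<open>The group F_p^n is modelled concretely: a vector is a function nat => nat whose
  coordinates i < n lie in {0..<p} and whose coordinates i >= n are 0.
  Addition is coordinatewise modulo p.\<close>

definition Fp_vecs :: "nat \<Rightarrow> nat \<Rightarrow> (nat \<Rightarrow> nat) set" where
  "Fp_vecs p n = {v. (\<forall>i<n. v i < p) \<and> (\<forall>i\<ge>n. v i = 0)}"

definition sum3_zero :: "nat \<Rightarrow> nat \<Rightarrow> (nat \<Rightarrow> nat) \<Rightarrow> (nat \<Rightarrow> nat) \<Rightarrow> (nat \<Rightarrow> nat) \<Rightarrow> bool" where
  "sum3_zero p n x y z \<longleftrightarrow> (\<forall>i<n. (x i + y i + z i) mod p = 0)"

definition tricolored_ordered_sum_free ::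
  "nat \<Rightarrow> nat \<Rightarrow> nat \<Rightarrow> (nat \<Rightarrow> nat \<Rightarrow> nat) \<Rightarrow> (nat \<Rightarrow> nat \<Rightarrow> nat) \<Rightarrow> (nat \<Rightarrow> nat \<Rightarrow> nat) \<Rightarrow> bool" where
  "tricolored_ordered_sum_free p n m a b c \<longleftrightarrow>
     (\<forall>i\<in>{1..m}. a i \<in> Fp_vecs p n \<and> b i \<in> Fp_vecs p n \<and> c i \<in> Fp_vecs p n) \<and>
     (\<forall>i\<in>{1..m}. sum3_zero p n (a i) (b i) (c i)) \<and>
     (\<forall>i\<in>{1..m}. \<forall>j\<in>{1..m}. \<forall>k\<in>{1..m}.
        sum3_zero p n (a i) (b j) (c k) \<longrightarrow> i \<le> j \<and> j \<le> k)"

definition bounded_monomials :: "nat \<Rightarrow> nat \<Rightarrow> (nat \<Rightarrow> nat) set" where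
  "bounded_monomials p n = {e. (\<forall>i<n. e i \<le> p - 1) \<and> (\<forall>i\<ge>n. e i = 0) \<and>
                               3 * (\<Sum>i<n. e i) \<le> (p - 1) * n}"

end

theory Submission
  imports Defs "HOL-Number_Theory.Number_Theory" "HOL-Library.FuncSet"
begin

(* Modulo p, the indicator of x + y + z = 0 in F_p^n is the polynomial
   prod_t (1 - (x_t + y_t + z_t)^(p-1)). Each of its monomials x^alpha y^beta z^gamma has total
   degree at most (p-1)n, so one of alpha, beta, gamma is among the N bounded monomials.
   Hence the tensor T(i,j,k) = [a_i + b_j + c_k = 0], which is supported on i <= j <= k and
   nonzero on the diagonal, is a sum of products in each of which one factor ranges over only
   N functions. Contracting the middle index against a vector v orthogonal to the N functions
   j |-> b_j^beta kills the terms labelled in the middle and leaves a matrix of rank at most 2N,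
   which is triangular with nonzero diagonal on the support of v. As v can be chosen with
   support of size at least m - N, we get m - N <= 2N.
   Linear algebra over F_p is done with integers modulo p, and ranks are compared by counting
   vectors with entries in {0..<p}. *)

lemma trinomial_expansion:
  fixes x y z :: "'a::comm_semiring_1"
  shows "(x + y + z) ^ q =
    (\<Sum>(\<alpha>, \<beta>, \<gamma>)\<in>{(\<alpha>, \<beta>, \<gamma>). \<alpha> + \<beta> + \<gamma> = q}.
       of_nat ((q choose \<alpha>) * ((q - \<alpha>) choose \<beta>)) * x ^ \<alpha> * y ^ \<beta> * z ^ \<gamma>)"
    (is "_ = ?rhs")
proof -
  have "(x + y + z) ^ q = (\<Sum>\<alpha>\<le>q. of_nat (q choose \<alpha>) * x ^ \<alpha> * (y + z) ^ (q - \<alpha>))"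
    using binomial_ring[of x "y + z" q] by (simp add: add.assoc)
  also have "\<dots> = (\<Sum>\<alpha>\<le>q. \<Sum>\<beta>\<le>q - \<alpha>.
      of_nat ((q choose \<alpha>) * ((q - \<alpha>) choose \<beta>)) * x ^ \<alpha> * y ^ \<beta> * z ^ (q - \<alpha> - \<beta>))"
    by (simp add: binomial_ring[of y z] sum_distrib_left mult_ac)
  also have "\<dots> = (\<Sum>(\<alpha>, \<beta>)\<in>(SIGMA \<alpha>:{..q}. {..q - \<alpha>}).
      of_nat ((q choose \<alpha>) * ((q - \<alpha>) choose \<beta>)) * x ^ \<alpha> * y ^ \<beta> * z ^ (q - \<alpha> - \<beta>))"
    by (simp add: sum.Sigma)
  also have "\<dots> = ?rhs"
    by (rule sum.reindex_bij_witness[where i = "\<lambda>(\<alpha>, \<beta>, \<gamma>). (\<alpha>, \<beta>)"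
          and j = "\<lambda>(\<alpha>, \<beta>). (\<alpha>, \<beta>, q - \<alpha> - \<beta>)"]) auto
  finally show ?thesis .
qed

definition exponent_triples :: "nat \<Rightarrow> (nat \<times> nat \<times> nat) set" where
  "exponent_triples q = {(\<alpha>, \<beta>, \<gamma>). \<alpha> + \<beta> + \<gamma> \<le> q}"

definition indicator_coeff :: "nat \<Rightarrow> nat \<times> nat \<times> nat \<Rightarrow> int" where
  "indicator_coeff q = (\<lambda>(\<alpha>, \<beta>, \<gamma>). of_bool (\<alpha> = 0 \<and> \<beta> = 0 \<and> \<gamma> = 0)
     - of_bool (\<alpha> + \<beta> + \<gamma> = q) * int ((q choose \<alpha>) * ((q - \<alpha>) choose \<beta>)))"

lemma finite_exponent_triples: "finite (exponent_triples q)"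
proof (rule finite_subset)
  show "exponent_triples q \<subseteq> {..q} \<times> {..q} \<times> {..q}"
    by (auto simp: exponent_triples_def)
qed simp

lemma one_minus_power_expansion:
  fixes x y z :: int
  shows "1 - (x + y + z) ^ q =
    (\<Sum>(\<alpha>, \<beta>, \<gamma>)\<in>exponent_triples q. indicator_coeff q (\<alpha>, \<beta>, \<gamma>) * x ^ \<alpha> * y ^ \<beta> * z ^ \<gamma>)"
proof -
  let ?K = "exponent_triples q"
  have "(\<Sum>(\<alpha>, \<beta>, \<gamma>)\<in>?K. of_bool (\<alpha> = 0 \<and> \<beta> = 0 \<and> \<gamma> = 0) * x ^ \<alpha> * y ^ \<beta> * z ^ \<gamma>)
      = (\<Sum>\<kappa>\<in>?K. if \<kappa> = (0, 0, 0) then 1 else 0)"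
    by (rule sum.cong) auto
  also have "\<dots> = 1"
    using finite_exponent_triples[of q] by (simp add: exponent_triples_def)
  moreover have "(\<Sum>(\<alpha>, \<beta>, \<gamma>)\<in>?K. of_bool (\<alpha> + \<beta> + \<gamma> = q) * int ((q choose \<alpha>) * ((q - \<alpha>) choose \<beta>))
        * x ^ \<alpha> * y ^ \<beta> * z ^ \<gamma>) = (x + y + z) ^ q"
    unfolding trinomial_expansion[of x y z q] using finite_exponent_triples[of q]
    by (intro sum.mono_neutral_cong_right) (auto simp: exponent_triples_def)
  ultimately show ?thesis
    by (simp add: indicator_coeff_def split_def left_diff_distrib sum_subtractf)
qed

lemma prod_of_bool:
  "finite A \<Longrightarrow> (\<Prod>x\<in>A. of_bool (P x)) = (of_bool (\<forall>x\<in>A. P x) :: 'a::comm_semiring_1)"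
  by (cases "\<forall>x\<in>A. P x") (auto intro!: prod_zero)

lemma fermat_indicator_cong:
  assumes "prime p"
  shows "[1 - int s ^ (p - 1) = of_bool (p dvd s)] (mod int p)"
proof (cases "p dvd s")
  case True
  moreover have "p - 1 > 0"
    using prime_gt_1_nat[OF assms] by simp
  ultimately have "int p dvd int s ^ (p - 1)"
    by (metis dvd_power dvd_trans int_dvd_int_iff of_nat_power)
  with True show ?thesis
    by (simp add: cong_iff_dvd_diff)
next
  case False
  then have "[int s ^ (p - 1) = 1] (mod int p)"
    using fermat_theorem[OF assms False] by (metis cong_int_iff of_nat_1 of_nat_power)
  then have "[1 - int s ^ (p - 1) = 1 - 1] (mod int p)"
    by (intro cong_diff cong_refl)
  with False show ?thesis
    by simp
qed

(* The projections vanish beyond n, as the members of bounded_monomials do. *)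

definition x_exponents :: "nat \<Rightarrow> (nat \<Rightarrow> nat \<times> nat \<times> nat) \<Rightarrow> nat \<Rightarrow> nat" where
  "x_exponents n e t = (if t < n then fst (e t) else 0)"

definition y_exponents :: "nat \<Rightarrow> (nat \<Rightarrow> nat \<times> nat \<times> nat) \<Rightarrow> nat \<Rightarrow> nat" where
  "y_exponents n e t = (if t < n then fst (snd (e t)) else 0)"

definition z_exponents :: "nat \<Rightarrow> (nat \<Rightarrow> nat \<times> nat \<times> nat) \<Rightarrow> nat \<Rightarrow> nat" where
  "z_exponents n e t = (if t < n then snd (snd (e t)) else 0)"

definition eval_monomial :: "nat \<Rightarrow> (nat \<Rightarrow> nat) \<Rightarrow> (nat \<Rightarrow> nat) \<Rightarrow> int" where
  "eval_monomial n u \<alpha> = (\<Prod>t<n. int (u t) ^ \<alpha> t)"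

definition expansion_coeff :: "nat \<Rightarrow> nat \<Rightarrow> (nat \<Rightarrow> nat \<times> nat \<times> nat) \<Rightarrow> int" where
  "expansion_coeff q n e = (\<Prod>t<n. indicator_coeff q (e t))"

lemma sum3_zero_indicator_cong:
  assumes "prime p"
  shows "[of_bool (sum3_zero p n x y z) =
    (\<Sum>e\<in>PiE {..<n} (\<lambda>_. exponent_triples (p - 1)). expansion_coeff (p - 1) n e
       * eval_monomial n x (x_exponents n e) * eval_monomial n y (y_exponents n e)
       * eval_monomial n z (z_exponents n e))] (mod int p)"
proof -
  let ?q = "p - 1"
  have "of_bool (sum3_zero p n x y z) = (\<Prod>t<n. of_bool (p dvd x t + y t + z t) :: int)"
    by (simp add: prod_of_bool sum3_zero_def dvd_eq_mod_eq_0 Ball_def)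
  also have "[\<dots> = (\<Prod>t<n. 1 - int (x t + y t + z t) ^ ?q)] (mod int p)"
    by (rule cong_prod, rule cong_sym, rule fermat_indicator_cong[OF assms])
  also have "(\<Prod>t<n. 1 - int (x t + y t + z t) ^ ?q) =
      (\<Prod>t<n. \<Sum>(\<alpha>, \<beta>, \<gamma>)\<in>exponent_triples ?q.
         indicator_coeff ?q (\<alpha>, \<beta>, \<gamma>) * int (x t) ^ \<alpha> * int (y t) ^ \<beta> * int (z t) ^ \<gamma>)"
    by (simp add: one_minus_power_expansion)
  also have "\<dots> = (\<Sum>e\<in>PiE {..<n} (\<lambda>_. exponent_triples ?q). \<Prod>t<n.
      indicator_coeff ?q (e t) * int (x t) ^ fst (e t) * int (y t) ^ fst (snd (e t)) * int (z t) ^ snd (snd (e t)))"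
    by (simp add: prod_sum_PiE finite_exponent_triples split_def)
  also have "\<dots> = (\<Sum>e\<in>PiE {..<n} (\<lambda>_. exponent_triples ?q). expansion_coeff ?q n e
       * eval_monomial n x (x_exponents n e) * eval_monomial n y (y_exponents n e)
       * eval_monomial n z (z_exponents n e))"
    by (simp add: expansion_coeff_def eval_monomial_def x_exponents_def y_exponents_def
        z_exponents_def prod.distrib)
  finally show ?thesis .
qed

lemma exponents_in_bounded_monomials:
  assumes "e \<in> PiE {..<n} (\<lambda>_. exponent_triples (p - 1))"
  shows "x_exponents n e \<in> bounded_monomials p n \<or> y_exponents n e \<in> bounded_monomials p n
    \<or> z_exponents n e \<in> bounded_monomials p n"
proof -
  have deg: "x_exponents n e t + y_exponents n e t + z_exponents n e t \<le> p - 1" if "t < n" for t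
  proof -
    have "e t \<in> exponent_triples (p - 1)"
      using assms that by blast
    then show ?thesis
      using that by (simp add: x_exponents_def y_exponents_def z_exponents_def exponent_triples_def split_beta)
  qed
  then have "(\<Sum>t<n. x_exponents n e t + y_exponents n e t + z_exponents n e t) \<le> n * (p - 1)"
    using sum_bounded_above[of "{..<n}" _ "p - 1"] by simp
  then have "(\<Sum>t<n. x_exponents n e t) + (\<Sum>t<n. y_exponents n e t) + (\<Sum>t<n. z_exponents n e t)
      \<le> (p - 1) * n"
    by (simp add: sum.distrib mult.commute)
  then consider "3 * (\<Sum>t<n. x_exponents n e t) \<le> (p - 1) * n"
    | "3 * (\<Sum>t<n. y_exponents n e t) \<le> (p - 1) * n"
    | "3 * (\<Sum>t<n. z_exponents n e t) \<le> (p - 1) * n"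
    by linarith
  moreover have "x_exponents n e t \<le> p - 1 \<and> y_exponents n e t \<le> p - 1 \<and> z_exponents n e t \<le> p - 1"
    for t
    using deg[of t] by (cases "t < n") (auto simp: x_exponents_def y_exponents_def z_exponents_def)
  moreover have "x_exponents n e t = 0 \<and> y_exponents n e t = 0 \<and> z_exponents n e t = 0" if "n \<le> t" for t
    using that by (simp add: x_exponents_def y_exponents_def z_exponents_def)
  ultimately show ?thesis
    unfolding bounded_monomials_def by cases auto
qed

lemma finite_bounded_monomials: "finite (bounded_monomials p n)"
proof (rule finite_subset)
  show "bounded_monomials p n \<subseteq> {e. \<forall>t. (t \<in> {..<n} \<longrightarrow> e t \<in> {..p - 1}) \<and> (t \<notin> {..<n} \<longrightarrow> e t = 0)}"
    unfolding bounded_monomials_def by (simp add: Collect_mono_iff not_less)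
qed (intro finite_set_of_finite_funs finite_lessThan finite_atMost)

lemma residue_eq_of_dvd_diff:
  assumes "a \<in> {0..<int p}" and "b \<in> {0..<int p}" and "int p dvd a - b"
  shows "a = b"
  using assms by (metis atLeastLessThan_iff mod_eq_dvd_iff mod_pos_pos_trivial)

lemma triangular_combination_dvd:
  fixes N :: "'i::linorder \<Rightarrow> 'i \<Rightarrow> int" and d :: "'i \<Rightarrow> int"
  assumes "prime p" and "finite D"
    and diag: "\<forall>i\<in>D. \<not> int p dvd N i i"
    and upper: "\<forall>i\<in>D. \<forall>k\<in>D. k < i \<longrightarrow> int p dvd N i k"
    and comb: "\<forall>k\<in>D. int p dvd (\<Sum>i\<in>D. d i * N i k)"
    and "i \<in> D"
  shows "int p dvd d i"
proof (rule ccontr)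
  let ?bad = "{i\<in>D. \<not> int p dvd d i}"
  assume "\<not> int p dvd d i"
  define k where "k = Min ?bad"
  have fin: "finite ?bad"
    using \<open>finite D\<close> by simp
  with \<open>i \<in> D\<close> \<open>\<not> int p dvd d i\<close> have "k \<in> ?bad"
    unfolding k_def by (intro Min_in) auto
  then have k: "k \<in> D" "\<not> int p dvd d k"
    by auto
  have least: "int p dvd d i" if "i \<in> D" "i < k" for i
    using Min_le[OF fin, of i] that unfolding k_def by force
  have "int p dvd (\<Sum>i\<in>D - {k}. d i * N i k)"
    using least upper k by (intro dvd_sum) (auto simp: neq_iff)
  moreover have "(\<Sum>i\<in>D. d i * N i k) = d k * N k k + (\<Sum>i\<in>D - {k}. d i * N i k)"
    using \<open>finite D\<close> k by (simp add: sum.remove)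
  ultimately have "int p dvd d k * N k k"
    using comb k by (metis dvd_add_left_iff)
  with \<open>prime p\<close> diag k show False
    by (simp add: prime_dvd_mult_iff)
qed

lemma low_rank_combination_dvd:
  fixes N :: "'i \<Rightarrow> 'i \<Rightarrow> int" and f g :: "'r \<Rightarrow> 'i \<Rightarrow> int"
  assumes low_rank: "\<forall>i\<in>D. [N i k = (\<Sum>r\<in>R. f r i * g r k)] (mod int p)"
    and comb: "\<forall>r\<in>R. int p dvd (\<Sum>i\<in>D. d i * f r i)"
  shows "int p dvd (\<Sum>i\<in>D. d i * N i k)"
proof -
  have "[(\<Sum>i\<in>D. d i * N i k) = (\<Sum>i\<in>D. d i * (\<Sum>r\<in>R. f r i * g r k))] (mod int p)"
    using low_rank by (intro cong_sum cong_mult cong_refl) auto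
  also have "(\<Sum>i\<in>D. d i * (\<Sum>r\<in>R. f r i * g r k)) = (\<Sum>r\<in>R. (\<Sum>i\<in>D. d i * f r i) * g r k)"
    by (simp add: sum_distrib_left sum_distrib_right mult.assoc sum.swap[of _ D])
  also have "[\<dots> = 0] (mod int p)"
    using comb by (simp add: cong_0_iff dvd_sum)
  finally show ?thesis
    by (simp add: cong_0_iff)
qed

lemma card_le_of_triangular_low_rank:
  fixes N :: "'i::linorder \<Rightarrow> 'i \<Rightarrow> int" and f g :: "'r \<Rightarrow> 'i \<Rightarrow> int"
  assumes "prime p" and "finite D" and "finite R"
    and diag: "\<forall>i\<in>D. \<not> int p dvd N i i"
    and upper: "\<forall>i\<in>D. \<forall>k\<in>D. k < i \<longrightarrow> int p dvd N i k"
    and low_rank: "\<forall>i\<in>D. \<forall>k\<in>D. [N i k = (\<Sum>r\<in>R. f r i * g r k)] (mod int p)"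
  shows "card D \<le> card R"
proof -
  let ?Zp = "{0..<int p}"
  define \<Psi> where "\<Psi> c = (\<lambda>r\<in>R. (\<Sum>i\<in>D. c i * f r i) mod int p)" for c
  have "inj_on \<Psi> (PiE D (\<lambda>_. ?Zp))"
  proof (rule inj_onI)
    fix c c' assume c: "c \<in> PiE D (\<lambda>_. ?Zp)" and c': "c' \<in> PiE D (\<lambda>_. ?Zp)" and "\<Psi> c = \<Psi> c'"
    have comb: "\<forall>r\<in>R. int p dvd (\<Sum>i\<in>D. (c i - c' i) * f r i)"
    proof
      fix r assume "r \<in> R"
      moreover have "\<Psi> c r = \<Psi> c' r"
        by (simp add: \<open>\<Psi> c = \<Psi> c'\<close>)
      ultimately have "(\<Sum>i\<in>D. c i * f r i) mod int p = (\<Sum>i\<in>D. c' i * f r i) mod int p"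
        by (simp add: \<Psi>_def)
      then show "int p dvd (\<Sum>i\<in>D. (c i - c' i) * f r i)"
        by (simp add: mod_eq_dvd_iff sum_subtractf left_diff_distrib)
    qed
    have "\<forall>k\<in>D. int p dvd (\<Sum>i\<in>D. (c i - c' i) * N i k)"
    proof
      fix k assume "k \<in> D"
      with low_rank have "\<forall>i\<in>D. [N i k = (\<Sum>r\<in>R. f r i * g r k)] (mod int p)"
        by blast
      then show "int p dvd (\<Sum>i\<in>D. (c i - c' i) * N i k)"
        using comb by (rule low_rank_combination_dvd)
    qed
    then have "int p dvd c i - c' i" if "i \<in> D" for i
      by (rule triangular_combination_dvd[where d = "\<lambda>i. c i - c' i", OF \<open>prime p\<close> \<open>finite D\<close> diag upper _ that])
    with c c' show "c = c'"
      by (intro PiE_ext residue_eq_of_dvd_diff) auto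
  qed
  moreover have "\<Psi> ` PiE D (\<lambda>_. ?Zp) \<subseteq> PiE R (\<lambda>_. ?Zp)"
    using prime_gt_0_nat[OF \<open>prime p\<close>] unfolding \<Psi>_def by auto
  ultimately have "card (PiE D (\<lambda>_. ?Zp)) \<le> card (PiE R (\<lambda>_. ?Zp))"
    using \<open>finite R\<close> by (intro card_inj_on_le) (auto intro: finite_PiE)
  then have "p ^ card D \<le> p ^ card R"
    using \<open>finite D\<close> \<open>finite R\<close> by (simp add: card_PiE)
  then show ?thesis
    by (rule power_le_imp_le_exp[OF prime_gt_1_nat[OF \<open>prime p\<close>]])
qed

definition residue_support :: "nat \<Rightarrow> 'i set \<Rightarrow> ('i \<Rightarrow> int) \<Rightarrow> 'i set" where
  "residue_support p M v = {j\<in>M. \<not> int p dvd v j}"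

lemma exists_kernel_vector_on:
  fixes B :: "'b \<Rightarrow> 'i \<Rightarrow> int"
  assumes "prime p" and "finite F" and "finite J" and "card J < card F"
  shows "\<exists>w. (\<forall>\<beta>\<in>J. int p dvd (\<Sum>j\<in>F. w j * B \<beta> j)) \<and> (\<forall>j. j \<notin> F \<longrightarrow> w j = 0)
    \<and> (\<exists>t\<in>F. \<not> int p dvd w t)"
proof -
  let ?Zp = "{0..<int p}"
  define L where "L f = (\<lambda>\<beta>\<in>J. (\<Sum>j\<in>F. f j * B \<beta> j) mod int p)" for f
  have "card (PiE J (\<lambda>_. ?Zp)) < card (PiE F (\<lambda>_. ?Zp))"
    using assms prime_gt_1_nat[OF \<open>prime p\<close>] by (simp add: card_PiE power_strict_increasing)
  moreover have "L ` PiE F (\<lambda>_. ?Zp) \<subseteq> PiE J (\<lambda>_. ?Zp)"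
    using prime_gt_0_nat[OF \<open>prime p\<close>] unfolding L_def by auto
  ultimately have "\<not> inj_on L (PiE F (\<lambda>_. ?Zp))"
    using card_inj_on_le[of L "PiE F (\<lambda>_. ?Zp)" "PiE J (\<lambda>_. ?Zp)"] \<open>finite J\<close>
    by (auto simp: finite_PiE)
  then obtain f1 f2 where f1: "f1 \<in> PiE F (\<lambda>_. ?Zp)" and f2: "f2 \<in> PiE F (\<lambda>_. ?Zp)"
    and "f1 \<noteq> f2" and "L f1 = L f2"
    unfolding inj_on_def by blast
  then obtain t where t: "t \<in> F" "f1 t \<noteq> f2 t"
    using PiE_ext by blast
  define w where "w j = (if j \<in> F then f1 j - f2 j else 0)" for j
  have kernel: "int p dvd (\<Sum>j\<in>F. w j * B \<beta> j)" if "\<beta> \<in> J" for \<beta>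
  proof -
    have "(\<Sum>j\<in>F. f1 j * B \<beta> j) mod int p = (\<Sum>j\<in>F. f2 j * B \<beta> j) mod int p"
      using fun_cong[OF \<open>L f1 = L f2\<close>, of \<beta>] that by (simp add: L_def)
    then show ?thesis
      by (simp add: w_def mod_eq_dvd_iff sum_subtractf left_diff_distrib)
  qed
  have nonzero: "\<not> int p dvd w t"
  proof -
    have "f1 t \<in> ?Zp" "f2 t \<in> ?Zp"
      using f1 f2 t by auto
    with t show ?thesis
      using residue_eq_of_dvd_diff by (auto simp: w_def)
  qed
  show ?thesis
  proof (intro exI[of _ w] conjI)
    show "\<forall>j. j \<notin> F \<longrightarrow> w j = 0"
      by (simp add: w_def)
  qed (use kernel nonzero t in blast)+
qed

lemma exists_kernel_vector_larger_support:
  fixes B :: "'b \<Rightarrow> 'i \<Rightarrow> int"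
  assumes "prime p" and "finite M" and "finite J"
    and kernel: "\<forall>\<beta>\<in>J. int p dvd (\<Sum>j\<in>M. v j * B \<beta> j)"
    and small: "card J < card (M - residue_support p M v)"
  shows "\<exists>u. (\<forall>\<beta>\<in>J. int p dvd (\<Sum>j\<in>M. u j * B \<beta> j))
    \<and> card (residue_support p M v) < card (residue_support p M u)"
proof -
  let ?F = "M - residue_support p M v"
  obtain w t where w_kernel: "\<forall>\<beta>\<in>J. int p dvd (\<Sum>j\<in>?F. w j * B \<beta> j)"
    and w_outside: "\<forall>j. j \<notin> ?F \<longrightarrow> w j = 0" and t: "t \<in> ?F" "\<not> int p dvd w t"
    using exists_kernel_vector_on[OF \<open>prime p\<close> finite_Diff[OF \<open>finite M\<close>] \<open>finite J\<close> small] by blast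
  define u where "u j = v j + w j" for j
  have "(\<Sum>j\<in>M. w j * B \<beta> j) = (\<Sum>j\<in>?F. w j * B \<beta> j)" for \<beta>
    using \<open>finite M\<close> w_outside by (intro sum.mono_neutral_right) auto
  then have "\<forall>\<beta>\<in>J. int p dvd (\<Sum>j\<in>M. u j * B \<beta> j)"
    using kernel w_kernel by (simp add: u_def distrib_right sum.distrib)
  moreover have "insert t (residue_support p M v) \<subseteq> residue_support p M u"
  proof
    fix j assume j: "j \<in> insert t (residue_support p M v)"
    show "j \<in> residue_support p M u"
    proof (cases "j = t")
      case True
      with t have "int p dvd v j" "\<not> int p dvd w j"
        by (auto simp: residue_support_def)
      with t True show ?thesis
        by (simp add: residue_support_def u_def dvd_add_right_iff)
    next
      case False
      with j w_outside show ?thesis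
        by (simp add: residue_support_def u_def)
    qed
  qed
  then have "card (insert t (residue_support p M v)) \<le> card (residue_support p M u)"
    using \<open>finite M\<close> by (intro card_mono) (auto simp: residue_support_def)
  moreover have "card (insert t (residue_support p M v)) = Suc (card (residue_support p M v))"
    using t \<open>finite M\<close> by (intro card_insert_disjoint) (auto simp: residue_support_def)
  ultimately show ?thesis
    by (intro exI[of _ u]) simp
qed

(* A kernel vector of maximal support has support at least |M| - |J|. *)
lemma exists_kernel_vector_large_support:
  fixes B :: "'b \<Rightarrow> 'i \<Rightarrow> int"
  assumes "prime p" and "finite M" and "finite J"
  shows "\<exists>v. (\<forall>\<beta>\<in>J. int p dvd (\<Sum>j\<in>M. v j * B \<beta> j))
    \<and> card M \<le> card (residue_support p M v) + card J"
proof -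
  define kernel where "kernel v \<longleftrightarrow> (\<forall>\<beta>\<in>J. int p dvd (\<Sum>j\<in>M. v j * B \<beta> j))" for v
  have "card (residue_support p M v) < Suc (card M)" for v
    unfolding residue_support_def using \<open>finite M\<close> by (simp add: card_mono le_imp_less_Suc)
  moreover have "kernel (\<lambda>_. 0)"
    by (simp add: kernel_def)
  ultimately obtain v where "kernel v"
    and maximal: "\<And>u. kernel u \<Longrightarrow> card (residue_support p M u) \<le> card (residue_support p M v)"
    using Lattices_Big.ex_has_greatest_nat[of kernel "\<lambda>_. 0" "\<lambda>v. card (residue_support p M v)"]
    by blast
  have "card M \<le> card (residue_support p M v) + card J"
  proof (rule ccontr)
    assume "\<not> ?thesis"
    then have "card J < card (M - residue_support p M v)"
      using \<open>finite M\<close> by (simp add: card_Diff_subset residue_support_def)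
    with \<open>kernel v\<close> obtain u where "kernel u"
      and "card (residue_support p M v) < card (residue_support p M u)"
      using exists_kernel_vector_larger_support[OF assms] unfolding kernel_def by blast
    with maximal show False
      by (simp add: leD)
  qed
  with \<open>kernel v\<close> show ?thesis
    unfolding kernel_def by blast
qed

lemma contraction_diagonal:
  fixes T :: "'i::linorder \<Rightarrow> 'i \<Rightarrow> 'i \<Rightarrow> int"
  assumes "prime p" and "finite M"
    and ordered: "\<forall>i\<in>M. \<forall>j\<in>M. \<forall>k\<in>M. \<not> int p dvd T i j k \<longrightarrow> i \<le> j \<and> j \<le> k"
    and "i \<in> M" and "\<not> int p dvd T i i i" and "\<not> int p dvd v i"
  shows "\<not> int p dvd (\<Sum>j\<in>M. v j * T i j i)"
proof -
  have "int p dvd T i j i" if "j \<in> M - {i}" for j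
    using ordered \<open>i \<in> M\<close> that by (metis DiffD1 DiffD2 order_antisym singletonI)
  then have "int p dvd (\<Sum>j\<in>M - {i}. v j * T i j i)"
    by (intro dvd_sum dvd_mult)
  moreover have "\<not> int p dvd v i * T i i i"
    using assms by (simp add: prime_dvd_mult_iff)
  moreover have "(\<Sum>j\<in>M. v j * T i j i) = v i * T i i i + (\<Sum>j\<in>M - {i}. v j * T i j i)"
    using \<open>finite M\<close> \<open>i \<in> M\<close> by (simp add: sum.remove)
  ultimately show ?thesis
    by (simp add: dvd_add_left_iff)
qed

lemma contraction_upper:
  fixes T :: "'i::linorder \<Rightarrow> 'i \<Rightarrow> 'i \<Rightarrow> int"
  assumes ordered: "\<forall>i\<in>M. \<forall>j\<in>M. \<forall>k\<in>M. \<not> int p dvd T i j k \<longrightarrow> i \<le> j \<and> j \<le> k"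
    and "i \<in> M" and "k \<in> M" and "k < i"
  shows "int p dvd (\<Sum>j\<in>M. v j * T i j k)"
  using assms by (intro dvd_sum) (meson dvd_mult le_less_trans not_le order.trans)

lemma sum_group_by_label:
  fixes F :: "'l \<Rightarrow> 'a::comm_semiring_1"
  assumes "finite E" and "finite J" and "l ` E \<subseteq> J"
  shows "(\<Sum>e\<in>E. F (l e) * G e) = (\<Sum>y\<in>J. F y * (\<Sum>e\<in>{e\<in>E. l e = y}. G e))"
proof -
  have "(\<Sum>e\<in>E. F (l e) * G e) = (\<Sum>y\<in>J. \<Sum>e\<in>{e\<in>E. l e = y}. F (l e) * G e)"
    using assms by (intro sum.group[symmetric]) auto
  then show ?thesis
    by (simp add: sum_distrib_left)
qed

lemma contraction_expansion:
  fixes T :: "'i \<Rightarrow> 'i \<Rightarrow> 'i \<Rightarrow> int" and A B C :: "'l \<Rightarrow> 'i \<Rightarrow> int"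
    and w :: "'e \<Rightarrow> int" and la lb lc :: "'e \<Rightarrow> 'l"
  assumes decomposition: "\<forall>i\<in>M. \<forall>j\<in>M. \<forall>k\<in>M.
      [T i j k = (\<Sum>e\<in>E. w e * A (la e) i * B (lb e) j * C (lc e) k)] (mod int p)"
    and "i \<in> M" and "k \<in> M"
  shows "[(\<Sum>j\<in>M. v j * T i j k) =
    (\<Sum>e\<in>E. w e * A (la e) i * (\<Sum>j\<in>M. v j * B (lb e) j) * C (lc e) k)] (mod int p)"
proof -
  have "[(\<Sum>j\<in>M. v j * T i j k) = (\<Sum>j\<in>M. v j * (\<Sum>e\<in>E. w e * A (la e) i * B (lb e) j * C (lc e) k))] (mod int p)"
    using assms by (intro cong_sum cong_mult cong_refl) auto
  also have "(\<Sum>j\<in>M. v j * (\<Sum>e\<in>E. w e * A (la e) i * B (lb e) j * C (lc e) k))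
      = (\<Sum>e\<in>E. w e * A (la e) i * (\<Sum>j\<in>M. v j * B (lb e) j) * C (lc e) k)"
    by (simp add: sum_distrib_left sum_distrib_right mult_ac sum.swap[of _ M])
  finally show ?thesis .
qed

(* Terms whose middle label lies in J vanish after contraction with v; every other term has
   its first or last label in J and is grouped by that label. *)
lemma contraction_low_rank:
  fixes T :: "'i \<Rightarrow> 'i \<Rightarrow> 'i \<Rightarrow> int" and A B C :: "'l \<Rightarrow> 'i \<Rightarrow> int"
    and w :: "'e \<Rightarrow> int" and la lb lc :: "'e \<Rightarrow> 'l"
  assumes "finite M" and "finite E" and "finite J"
    and decomposition: "\<forall>i\<in>M. \<forall>j\<in>M. \<forall>k\<in>M.
      [T i j k = (\<Sum>e\<in>E. w e * A (la e) i * B (lb e) j * C (lc e) k)] (mod int p)"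
    and labels: "\<forall>e\<in>E. la e \<in> J \<or> lb e \<in> J \<or> lc e \<in> J"
    and kernel: "\<forall>\<beta>\<in>J. int p dvd (\<Sum>j\<in>M. v j * B \<beta> j)"
  shows "\<exists>f g :: 'l + 'l \<Rightarrow> 'i \<Rightarrow> int. \<forall>i\<in>M. \<forall>k\<in>M.
    [(\<Sum>j\<in>M. v j * T i j k) = (\<Sum>r\<in>J <+> J. f r i * g r k)] (mod int p)"
proof -
  define S where "S \<beta> = (\<Sum>j\<in>M. v j * B \<beta> j)" for \<beta>
  define E\<^sub>A where "E\<^sub>A = {e\<in>E. la e \<in> J}"
  define E\<^sub>B where "E\<^sub>B = {e\<in>E. la e \<notin> J \<and> lb e \<in> J}"
  define E\<^sub>C where "E\<^sub>C = {e\<in>E. la e \<notin> J \<and> lb e \<notin> J}"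
  define f where "f = case_sum A (\<lambda>\<gamma> i. \<Sum>e\<in>{e\<in>E\<^sub>C. lc e = \<gamma>}. w e * A (la e) i * S (lb e))"
  define g where "g = case_sum (\<lambda>\<alpha> k. \<Sum>e\<in>{e\<in>E\<^sub>A. la e = \<alpha>}. w e * S (lb e) * C (lc e) k) C"
  have fin: "finite E\<^sub>A" "finite E\<^sub>B" "finite E\<^sub>C"
    using \<open>finite E\<close> by (auto simp: E\<^sub>A_def E\<^sub>B_def E\<^sub>C_def)
  have partition: "E = E\<^sub>A \<union> E\<^sub>B \<union> E\<^sub>C" "E\<^sub>A \<inter> E\<^sub>B = {}" "(E\<^sub>A \<union> E\<^sub>B) \<inter> E\<^sub>C = {}"
    by (auto simp: E\<^sub>A_def E\<^sub>B_def E\<^sub>C_def)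
  have "[(\<Sum>j\<in>M. v j * T i j k) = (\<Sum>r\<in>J <+> J. f r i * g r k)] (mod int p)" if "i \<in> M" "k \<in> M" for i k
  proof -
    define summand where "summand e = w e * A (la e) i * S (lb e) * C (lc e) k" for e
    have "[(\<Sum>j\<in>M. v j * T i j k) = (\<Sum>e\<in>E. summand e)] (mod int p)"
      unfolding summand_def S_def
      by (rule contraction_expansion[where T = T and w = w and A = A and B = B and C = C
            and la = la and lb = lb and lc = lc, OF decomposition that])
    also have "(\<Sum>e\<in>E. summand e) = (\<Sum>e\<in>E\<^sub>A. summand e) + (\<Sum>e\<in>E\<^sub>B. summand e) + (\<Sum>e\<in>E\<^sub>C. summand e)"
      using fin partition by (simp add: sum.union_disjoint)
    also have "[\<dots> = (\<Sum>e\<in>E\<^sub>A. summand e) + 0 + (\<Sum>e\<in>E\<^sub>C. summand e)] (mod int p)"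
    proof -
      have "int p dvd (\<Sum>e\<in>E\<^sub>B. summand e)"
        using kernel by (intro dvd_sum) (auto simp: E\<^sub>B_def summand_def S_def)
      then show ?thesis
        by (intro cong_add cong_refl) (simp add: cong_0_iff)
    qed
    also have "(\<Sum>e\<in>E\<^sub>A. summand e) = (\<Sum>\<alpha>\<in>J. f (Inl \<alpha>) i * g (Inl \<alpha>) k)"
      using sum_group_by_label[OF fin(1) \<open>finite J\<close>, of la "\<lambda>\<alpha>. A \<alpha> i" "\<lambda>e. w e * S (lb e) * C (lc e) k"]
      by (auto simp: E\<^sub>A_def f_def g_def summand_def mult_ac)
    also have "(\<Sum>e\<in>E\<^sub>C. summand e) = (\<Sum>\<gamma>\<in>J. f (Inr \<gamma>) i * g (Inr \<gamma>) k)"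
      using sum_group_by_label[OF fin(3) \<open>finite J\<close>, of lc "\<lambda>\<gamma>. C \<gamma> k" "\<lambda>e. w e * A (la e) i * S (lb e)"]
        labels by (auto simp: E\<^sub>C_def f_def g_def summand_def mult_ac)
    finally show ?thesis
      using \<open>finite J\<close> by (simp add: sum.Plus comp_def)
  qed
  then show ?thesis
    by blast
qed

lemma card_le_of_ordered_decomposition:
  fixes T :: "'i::linorder \<Rightarrow> 'i \<Rightarrow> 'i \<Rightarrow> int" and A B C :: "'l \<Rightarrow> 'i \<Rightarrow> int"
    and w :: "'e \<Rightarrow> int" and la lb lc :: "'e \<Rightarrow> 'l"
  assumes "prime p" and "finite M" and "finite E" and "finite J"
    and ordered: "\<forall>i\<in>M. \<forall>j\<in>M. \<forall>k\<in>M. \<not> int p dvd T i j k \<longrightarrow> i \<le> j \<and> j \<le> k"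
    and diagonal: "\<forall>i\<in>M. \<not> int p dvd T i i i"
    and decomposition: "\<forall>i\<in>M. \<forall>j\<in>M. \<forall>k\<in>M.
      [T i j k = (\<Sum>e\<in>E. w e * A (la e) i * B (lb e) j * C (lc e) k)] (mod int p)"
    and labels: "\<forall>e\<in>E. la e \<in> J \<or> lb e \<in> J \<or> lc e \<in> J"
  shows "card M \<le> 3 * card J"
proof -
  obtain v where kernel: "\<forall>\<beta>\<in>J. int p dvd (\<Sum>j\<in>M. v j * B \<beta> j)"
    and large: "card M \<le> card (residue_support p M v) + card J"
    using exists_kernel_vector_large_support[OF \<open>prime p\<close> \<open>finite M\<close> \<open>finite J\<close>] by blast
  obtain f g :: "'l + 'l \<Rightarrow> 'i \<Rightarrow> int" where low_rank: "\<forall>i\<in>M. \<forall>k\<in>M.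
      [(\<Sum>j\<in>M. v j * T i j k) = (\<Sum>r\<in>J <+> J. f r i * g r k)] (mod int p)"
    using contraction_low_rank[OF \<open>finite M\<close> \<open>finite E\<close> \<open>finite J\<close> decomposition labels kernel] by blast
  have "card (residue_support p M v) \<le> card (J <+> J)"
  proof (rule card_le_of_triangular_low_rank[where N = "\<lambda>i k. \<Sum>j\<in>M. v j * T i j k"])
    show "\<forall>i\<in>residue_support p M v. \<not> int p dvd (\<Sum>j\<in>M. v j * T i j i)"
      using contraction_diagonal[OF \<open>prime p\<close> \<open>finite M\<close> ordered] diagonal
      by (auto simp: residue_support_def)
    show "\<forall>i\<in>residue_support p M v. \<forall>k\<in>residue_support p M v.
        k < i \<longrightarrow> int p dvd (\<Sum>j\<in>M. v j * T i j k)"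
      using contraction_upper[OF ordered] by (auto simp: residue_support_def)
    show "\<forall>i\<in>residue_support p M v. \<forall>k\<in>residue_support p M v.
        [(\<Sum>j\<in>M. v j * T i j k) = (\<Sum>r\<in>J <+> J. f r i * g r k)] (mod int p)"
      using low_rank by (auto simp: residue_support_def)
  qed (use \<open>prime p\<close> \<open>finite M\<close> \<open>finite J\<close> in \<open>auto simp: residue_support_def\<close>)
  with large \<open>finite J\<close> show ?thesis
    by (simp add: card_Plus)
qed

lemma tricolored_ordered_sum_free_indicator:
  assumes "prime p" and "tricolored_ordered_sum_free p n m a b c"
  shows "\<forall>i\<in>{1..m}. \<forall>j\<in>{1..m}. \<forall>k\<in>{1..m}.
      \<not> int p dvd of_bool (sum3_zero p n (a i) (b j) (c k)) \<longrightarrow> i \<le> j \<and> j \<le> k"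
    and "\<forall>i\<in>{1..m}. \<not> int p dvd of_bool (sum3_zero p n (a i) (b i) (c i))"
proof -
  have "\<forall>i\<in>{1..m}. sum3_zero p n (a i) (b i) (c i)"
    and sum_free: "\<forall>i\<in>{1..m}. \<forall>j\<in>{1..m}. \<forall>k\<in>{1..m}.
      sum3_zero p n (a i) (b j) (c k) \<longrightarrow> i \<le> j \<and> j \<le> k"
    using assms(2) unfolding tricolored_ordered_sum_free_def by blast+
  then show "\<forall>i\<in>{1..m}. \<not> int p dvd of_bool (sum3_zero p n (a i) (b i) (c i))"
    using \<open>prime p\<close> not_prime_1 by fastforce
  show "\<forall>i\<in>{1..m}. \<forall>j\<in>{1..m}. \<forall>k\<in>{1..m}.
      \<not> int p dvd of_bool (sum3_zero p n (a i) (b j) (c k)) \<longrightarrow> i \<le> j \<and> j \<le> k"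
    using sum_free by (metis dvd_0_right of_bool_eq(1))
qed

theorem theorem3:
  fixes p n m :: nat and a b c :: "nat \<Rightarrow> nat \<Rightarrow> nat"
  assumes "prime p" and "n > 0"
    and "tricolored_ordered_sum_free p n m a b c"
  shows "m \<le> 3 * card (bounded_monomials p n)"
proof -
  have "card {1..m} \<le> 3 * card (bounded_monomials p n)"
  proof (rule card_le_of_ordered_decomposition[where w = "expansion_coeff (p - 1) n"
        and A = "\<lambda>\<alpha> i. eval_monomial n (a i) \<alpha>" and la = "x_exponents n"
        and B = "\<lambda>\<beta> j. eval_monomial n (b j) \<beta>" and lb = "y_exponents n"
        and C = "\<lambda>\<gamma> k. eval_monomial n (c k) \<gamma>" and lc = "z_exponents n",
        OF \<open>prime p\<close> _ _ _ tricolored_ordered_sum_free_indicator[OF \<open>prime p\<close> assms(3)]])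
    show "\<forall>i\<in>{1..m}. \<forall>j\<in>{1..m}. \<forall>k\<in>{1..m}. [of_bool (sum3_zero p n (a i) (b j) (c k)) =
        (\<Sum>e\<in>PiE {..<n} (\<lambda>_. exponent_triples (p - 1)). expansion_coeff (p - 1) n e
          * eval_monomial n (a i) (x_exponents n e) * eval_monomial n (b j) (y_exponents n e)
          * eval_monomial n (c k) (z_exponents n e))] (mod int p)"
      using sum3_zero_indicator_cong[OF \<open>prime p\<close>] by blast
  qed (use exponents_in_bounded_monomials in
      \<open>auto simp: finite_PiE finite_exponent_triples finite_bounded_monomials\<close>)
  then show ?thesis
    by simp
qed

end
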